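(* Let $\mathcal Q_1,\dots,\mathcal Q_l\subseteq V$ be linear subspaces. The following are equivalent: (1) the sequence of ideals $(\mathcal Q_1),\dots,(\mathcal Q_l)$ of $S=K[V]$ is linearly joined; (2) for all $i=1,\dots,l$ there exist linear subspaces $\mathcal D_i,\mathcal P_i\subseteq V$, with $\mathcal D_l=0$ and $\mathcal P_1=0$, such that (a) $\mathcal Q_i=\mathcal D_i\oplus\mathcal P_i$; (b) $\mathcal D_1\supseteq\mathcal D_2\supseteq\dots\supseteq\mathcal D_l$; (c) $\bigcap_{j=1}^{k-1}(\mathcal Q_j)\subseteq(\mathcal P_k,\mathcal D_{k-1})$ for all $k=2,\dots,l$.
   Context: $K$ is a field, $V$ a $K$-vector space of dimension $r+1$, $S=K[V]$ the polynomial ring, $\mathbb P^r$ the associated projective space. For $Q\subseteq V$, $(Q)$ is the ideal of $S$ generated by $Q$; $(\mathcal P,\mathcal D)$ is the ideal generated by $\mathcal P\cup\mathcal D$. The ideal $(\mathcal Q_i)$ defines a linear subspace $\mathcal L_i\subseteq\mathbb P^r$. A sequence $\mathcal L_1,\dots,\mathcal L_l$ of (irreducible) projective subvarieties is linearly joined if for every $i=1,\dots,l-1$, $\mathcal L_{i+1}\cap(\mathcal L_1\cup\dots\cup\mathcal L_i)=\mathrm{span}(\mathcal L_{i+1})\cap\mathrm{span}(\mathcal L_1\cup\dots\cup\mathcal L_i)$, where $\mathrm{span}$ is the smallest linear subspace containing the set; the sequence of ideals is called linearly joined if the sequence of varieties they define is. *)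

theory Defs
  imports "HOL-Analysis.Analysis" "HOL-Library.Poly_Mapping" "HOL-Algebra.Algebraic_Closure_Type"
begin

(* V = K^(r+1) (coordinates of linear forms w.r.t. a basis x_i, i ranging over the
  finite type 'n, so r+1 = CARD('n)); S = K[V] = K[x_i | i :: 'n] is modelled by
  ('n \<Rightarrow>\<^sub>0 nat) \<Rightarrow>\<^sub>0 'k (monomial exponents to coefficients).*)

type_synonym ('k, 'n) mpoly = "('n \<Rightarrow>\<^sub>0 nat) \<Rightarrow>\<^sub>0 'k"

definition lin_form :: "'k::field ^ 'n::finite \<Rightarrow> ('k, 'n) mpoly" where
  "lin_form c = (\<Sum>i\<in>UNIV. Poly_Mapping.single (Poly_Mapping.single i 1) (c $ i))"

definition gen_ideal :: "'a::comm_ring_1 set \<Rightarrow> 'a set" where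
  "gen_ideal G = {p. \<exists>F a. finite F \<and> F \<subseteq> G \<and> p = (\<Sum>g\<in>F. a g * g)}"

definition lin_ideal :: "('k::field ^ 'n::finite) set \<Rightarrow> ('k, 'n) mpoly set" where
  "lin_ideal Q = gen_ideal (lin_form ` Q)"

(* Zero locus of a set of linear forms, as an affine cone over the algebraic closure of K
  (the points of the projective variety are the nonzero points of this cone up to scaling;
  the linear-joinedness condition is insensitive to this passage to cones).*)
definition zero_locus :: "('k::field ^ 'n::finite) set \<Rightarrow> ('k alg_closure ^ 'n) set" where
  "zero_locus Q = {x. \<forall>c\<in>Q. (\<Sum>i\<in>UNIV. to_ac (c $ i) * x $ i) = 0}"

definition linearly_joined :: "(nat \<Rightarrow> ('a::field ^ 'n::finite) set) \<Rightarrow> nat \<Rightarrow> bool" where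
  "linearly_joined L l \<longleftrightarrow>
     (\<forall>i\<in>{1..<l}. L (i+1) \<inter> (\<Union>j\<in>{1..i}. L j) =
                     vec.span (L (i+1)) \<inter> vec.span (\<Union>j\<in>{1..i}. L j))"

definition ideals_linearly_joined :: "(nat \<Rightarrow> ('k::field ^ 'n::finite) set) \<Rightarrow> nat \<Rightarrow> bool" where
  "ideals_linearly_joined Q l \<longleftrightarrow> linearly_joined (\<lambda>i. zero_locus (Q i)) l"

definition direct_sum_eq :: "('k::field ^ 'n::finite) set \<Rightarrow> ('k ^ 'n) set \<Rightarrow> ('k ^ 'n) set \<Rightarrow> bool" where
  "direct_sum_eq Q D P \<longleftrightarrow> Q = {d + p | d p. d \<in> D \<and> p \<in> P} \<and> D \<inter> P = {0}"

end

theory Submission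
  imports Defs
begin

text \<open>
  Let Z(Q) be the common zero set of the forms in Q over the algebraic closure. Since Z(Q_{i+1})
  is a linear space, step i of linear joinedness says
  Z(Q_{i+1}) \<inter> span (Z(Q_1) \<union> ... \<union> Z(Q_i)) \<subseteq> Z(Q_1) \<union> ... \<union> Z(Q_i).

  If (c) holds and x were a point on the left outside every Z(Q_j), pick c_j \<in> Q_j with
  c_j(x) \<noteq> 0: the product of the c_j lies in (Q_1) \<inter> ... \<inter> (Q_i) \<subseteq> (P_{i+1}, D_i), yet every
  generator of that ideal vanishes at x, as P_{i+1} \<subseteq> Q_{i+1} and D_i \<subseteq> Q_j for all j \<le> i.

  Conversely, by linear duality span (Z(Q_1) \<union> ... \<union> Z(Q_i)) is cut out by Q_1 \<inter> ... \<inter> Q_i,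
  so the left-hand side contains the zero set of Q_{i+1} + Q_1 \<inter> ... \<inter> Q_i. A vector space
  over an infinite field is not a finite union of proper subspaces, so this zero set lies in a
  single Z(Q_j), which dually means Q_j \<subseteq> Q_{i+1} + Q_1 \<inter> ... \<inter> Q_i. With
  D_i = Q_1 \<inter> ... \<inter> Q_i for i < l and P_i a complement of D_i in Q_i, this gives (c).
\<close>

section \<open>Complements of subspaces\<close>

lemma (in Modules.module) span_Int_span_diff:
  assumes "independent B" and "A \<subseteq> B"
  shows "span A \<inter> span (B - A) = {0}"
proof (intro equalityI subsetI)
  fix x assume x: "x \<in> span A \<inter> span (B - A)"
  have "representation B x = representation A x"
    using x assms by (intro representation_extend) auto
  moreover have "representation B x = representation (B - A) x"
    using x assms by (intro representation_extend) auto
  ultimately have "representation B x b = 0" for b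
    using representation_ne_zero[of A x b] representation_ne_zero[of "B - A" x b] by auto
  moreover have "x \<in> span B"
    using x assms(2) span_mono by blast
  ultimately show "x \<in> {0}"
    using sum_nonzero_representation_eq[OF assms(1), of x] by simp
qed (simp add: span_zero)

lemma (in Vector_Spaces.vector_space) exists_complement_subspace:
  assumes "subspace D" and "subspace Q" and "D \<subseteq> Q"
  obtains P where "subspace P" and "Q = D + P" and "D \<inter> P = {0}"
proof -
  obtain A where A: "A \<subseteq> D" "independent A" "D \<subseteq> span A"
    by (rule basis_exists)
  then obtain B where B: "A \<subseteq> B" "B \<subseteq> Q" "independent B" "Q \<subseteq> span B"
    using assms(3) maximal_independent_subset_extend by (metis order_trans)
  have span_A: "span A = D"
    using A assms(1) span_minimal span_mono by (simp add: span_subspace)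
  have span_B: "span B = Q"
    using B assms(2) by (simp add: span_subspace)
  have "Q = span (A \<union> (B - A))"
    using B(1) span_B by (simp add: Un_absorb1)
  also have "\<dots> = D + span (B - A)"
    unfolding span_Un span_A by (auto simp: set_plus_def)
  finally have "Q = D + span (B - A)" .
  moreover have "D \<inter> span (B - A) = {0}"
    using span_Int_span_diff[OF B(3,1)] span_A by simp
  ultimately show ?thesis
    using that subspace_span by blast
qed

lemma (in Modules.module) subset_plus_subspace_trans:
  assumes "subspace S" and "A \<subseteq> B + S" and "B \<subseteq> C + S"
  shows "A \<subseteq> C + S"
proof
  fix a assume "a \<in> A"
  then obtain b s where "b \<in> B" "s \<in> S" "a = b + s"
    using assms(2) by (auto simp: set_plus_def)
  moreover obtain c s' where "c \<in> C" "s' \<in> S" "b = c + s'"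
    using assms(3) \<open>b \<in> B\<close> by (auto simp: set_plus_def)
  ultimately have "a = c + (s' + s)" and "s' + s \<in> S"
    using subspace_add[OF assms(1)] by (simp_all add: add.assoc)
  then show "a \<in> C + S"
    using \<open>c \<in> C\<close> by blast
qed

section \<open>Annihilators\<close>

definition pairing :: "'a::comm_semiring_1 ^ 'n::finite \<Rightarrow> 'a ^ 'n \<Rightarrow> 'a" where
  "pairing c x = (\<Sum>i\<in>UNIV. c $ i * x $ i)"

definition annihilator :: "('a::comm_semiring_1 ^ 'n::finite) set \<Rightarrow> ('a ^ 'n) set" where
  "annihilator A = {x. \<forall>c\<in>A. pairing c x = 0}"

lemma pairing_commute: "pairing c x = pairing x c"
  by (simp add: pairing_def mult.commute)

lemma pairing_add_right: "pairing c (x + y) = pairing c x + pairing c y"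
  by (simp add: pairing_def distrib_left sum.distrib)

lemma pairing_scale_right: "pairing c (t *s x) = t * pairing c x"
  by (simp add: pairing_def sum_distrib_left mult_ac)

lemma subspace_annihilator: "vec.subspace (annihilator (A :: ('a::field ^ 'n::finite) set))"
  unfolding vec.subspace_def annihilator_def
  by (simp add: pairing_add_right pairing_scale_right) (simp add: pairing_def)

lemma annihilator_antimono: "A \<subseteq> B \<Longrightarrow> annihilator B \<subseteq> annihilator A"
  by (auto simp: annihilator_def)

lemma subset_annihilator_annihilator: "A \<subseteq> annihilator (annihilator A)"
  by (auto simp: annihilator_def pairing_commute)

lemma exists_annihilator_pairing_nonzero:
  fixes E :: "('a::field ^ 'n::finite) set"
  assumes "vec.subspace E" and "a \<notin> E"
  obtains x where "x \<in> annihilator E" and "pairing a x \<noteq> 0"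
proof -
  obtain B where B: "B \<subseteq> E" "vec.independent B" "E \<subseteq> vec.span B"
    by (rule vec.basis_exists)
  have "a \<notin> vec.span B"
    using B(1) assms(2) vec.span_minimal[OF B(1) assms(1)] by blast
  then have indep: "vec.independent (insert a B)"
    using B(2) by (rule vec.independent_insertI)
  interpret pair: vector_space_pair "(*s) :: 'a \<Rightarrow> 'a ^ 'n \<Rightarrow> 'a ^ 'n" "(*) :: 'a \<Rightarrow> 'a \<Rightarrow> 'a"
    by unfold_locales
  define f where "f = pair.construct (insert a B) (\<lambda>b. if b = a then 1 else 0)"
  interpret f: Vector_Spaces.linear "(*s) :: 'a \<Rightarrow> 'a ^ 'n \<Rightarrow> 'a ^ 'n" "(*) :: 'a \<Rightarrow> 'a \<Rightarrow> 'a" f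
    unfolding f_def using indep by (rule pair.linear_construct)
  have f_a: "f a = 1"
    unfolding f_def using indep by (simp add: pair.construct_basis)
  have "f b = 0" if "b \<in> B" for b
  proof -
    have "b \<noteq> a"
      using that \<open>a \<notin> vec.span B\<close> vec.span_base by blast
    then show ?thesis
      unfolding f_def using indep that by (simp add: pair.construct_basis)
  qed
  moreover have "vec.subspace {y. f y = 0}"
    unfolding vec.subspace_def by (simp add: f.add f.scale)
  ultimately have "vec.span B \<subseteq> {y. f y = 0}"
    by (intro vec.span_minimal) auto
  then have "E \<subseteq> {y. f y = 0}"
    using B(3) by blast
  define x where "x = (\<chi> i. f (axis i 1))"
  have f_eq: "f y = pairing y x" for y
  proof -
    have "f y = f (\<Sum>i\<in>UNIV. y $ i *s axis i 1)"
      by (simp add: basis_expansion)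
    also have "\<dots> = pairing y x"
      by (simp add: f.sum f.scale pairing_def x_def)
    finally show ?thesis .
  qed
  show ?thesis
  proof
    show "x \<in> annihilator E"
      using \<open>E \<subseteq> {y. f y = 0}\<close> by (auto simp: annihilator_def f_eq)
    show "pairing a x \<noteq> 0"
      using f_a by (simp add: f_eq)
  qed
qed

lemma annihilator_annihilator:
  fixes E :: "('a::field ^ 'n::finite) set"
  assumes "vec.subspace E"
  shows "annihilator (annihilator E) = E"
proof
  show "annihilator (annihilator E) \<subseteq> E"
  proof
    fix a assume a: "a \<in> annihilator (annihilator E)"
    show "a \<in> E"
    proof (rule ccontr)
      assume "a \<notin> E"
      then obtain x where x: "x \<in> annihilator E" and "pairing a x \<noteq> 0"
        using assms exists_annihilator_pairing_nonzero by blast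
      moreover have "pairing x a = 0"
        using a x by (simp add: annihilator_def)
      ultimately show False
        by (simp add: pairing_commute)
    qed
  qed
qed (rule subset_annihilator_annihilator)

lemma annihilator_Inter_subset_span:
  fixes Q :: "'i \<Rightarrow> ('a::field ^ 'n::finite) set"
  assumes "\<forall>i\<in>I. vec.subspace (Q i)"
  shows "annihilator (\<Inter>i\<in>I. Q i) \<subseteq> vec.span (\<Union>i\<in>I. annihilator (Q i))"
proof -
  let ?S = "vec.span (\<Union>i\<in>I. annihilator (Q i))"
  have "annihilator ?S \<subseteq> Q i" if "i \<in> I" for i
  proof -
    have "annihilator ?S \<subseteq> annihilator (annihilator (Q i))"
      using that by (intro annihilator_antimono) (auto intro: vec.span_base)
    then show ?thesis
      using assms that by (simp add: annihilator_annihilator)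
  qed
  then have "annihilator (\<Inter>i\<in>I. Q i) \<subseteq> annihilator (annihilator ?S)"
    by (intro annihilator_antimono) blast
  also have "\<dots> = ?S"
    by (simp add: annihilator_annihilator)
  finally show ?thesis .
qed

lemma infinite_UNIV_alg_closed: "infinite (UNIV :: 'a::alg_closed_field set)"
proof
  assume fin: "finite (UNIV :: 'a set)"
  define q :: "'a poly" where "q = (\<Prod>a\<in>UNIV. [:-a, 1:]) + 1"
  have "Polynomial.degree (\<Prod>a\<in>UNIV. [:-a, 1:] :: 'a poly) = card (UNIV :: 'a set)"
    by (subst degree_prod_eq_sum_degree) auto
  with fin have "Polynomial.degree q > 0"
    by (simp add: q_def degree_add_eq_left card_gt_0_iff)
  then obtain x where "poly q x = 0"
    using alg_closed_imp_poly_has_root by blast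
  moreover have "poly (\<Prod>a\<in>UNIV. [:-a, 1:]) x = 0"
    using fin by (simp add: poly_prod prod_zero_iff)
  ultimately show False
    by (simp add: q_def)
qed

text \<open>A line \<open>v + t u\<close> either lies in a hyperplane or meets it in at most one point, so over an
  infinite field some \<open>t\<close> avoids all finitely many of them.\<close>
lemma subspace_avoids_hyperplanes:
  fixes U :: "('a::field ^ 'n::finite) set" and c :: "'j \<Rightarrow> 'a ^ 'n"
  assumes "infinite (UNIV :: 'a set)" and "vec.subspace U" and "finite J"
    and "\<And>j. j \<in> J \<Longrightarrow> \<exists>u\<in>U. pairing (c j) u \<noteq> 0"
  shows "\<exists>v\<in>U. \<forall>j\<in>J. pairing (c j) v \<noteq> 0"
  using assms(3,4)
proof (induction J rule: finite_induct)
  case empty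
  show ?case
    using vec.subspace_0[OF assms(2)] by blast
next
  case (insert j0 J)
  then obtain v where v: "v \<in> U" "\<forall>j\<in>J. pairing (c j) v \<noteq> 0"
    by blast
  obtain u where u: "u \<in> U" "pairing (c j0) u \<noteq> 0"
    using insert.prems by blast
  have "finite ((\<lambda>j. - pairing (c j) v / pairing (c j) u) ` insert j0 J)"
    using insert.hyps by simp
  then obtain t where t: "t \<notin> (\<lambda>j. - pairing (c j) v / pairing (c j) u) ` insert j0 J"
    using assms(1) ex_new_if_finite by blast
  have "pairing (c j) (v + t *s u) \<noteq> 0" if j: "j \<in> insert j0 J" for j
  proof (cases "pairing (c j) u = 0")
    case True
    then show ?thesis
      using j u v by (auto simp: pairing_add_right pairing_scale_right)
  next
    case False
    then have "t \<noteq> - pairing (c j) v / pairing (c j) u"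
      using t j by blast
    with False show ?thesis
      by (auto simp: pairing_add_right pairing_scale_right field_simps add_eq_0_iff)
  qed
  moreover have "v + t *s u \<in> U"
    using assms(2) u v by (simp add: vec.subspace_add vec.subspace_scale)
  ultimately show ?case
    by blast
qed

section \<open>Zero loci over the algebraic closure\<close>

definition to_ac_vec :: "'k::field ^ 'n::finite \<Rightarrow> 'k alg_closure ^ 'n" where
  "to_ac_vec c = (\<chi> i. to_ac (c $ i))"

lemma zero_locus_eq_annihilator: "zero_locus Q = annihilator (to_ac_vec ` Q)"
  by (auto simp: zero_locus_def annihilator_def pairing_def to_ac_vec_def)

lemma pairing_to_ac_vec: "pairing (to_ac_vec c) (to_ac_vec x) = to_ac (pairing c x)"
  by (simp add: pairing_def to_ac_vec_def to_ac_sum)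

lemma to_ac_vec_annihilator: "to_ac_vec ` annihilator Q \<subseteq> zero_locus Q"
  by (auto simp: zero_locus_eq_annihilator annihilator_def pairing_to_ac_vec)

lemma subspace_zero_locus: "vec.subspace (zero_locus Q)"
  by (simp add: zero_locus_eq_annihilator subspace_annihilator)

lemma zero_locus_antimono: "A \<subseteq> B \<Longrightarrow> zero_locus B \<subseteq> zero_locus A"
  by (auto simp: zero_locus_def)

lemma zero_locus_Un: "zero_locus (A \<union> B) = zero_locus A \<inter> zero_locus B"
  by (auto simp: zero_locus_def)

lemma span_zero_locus_subset_zero_locus:
  assumes "\<forall>j\<in>I. D \<subseteq> Q j"
  shows "vec.span (\<Union>j\<in>I. zero_locus (Q j)) \<subseteq> zero_locus D"
  using assms zero_locus_antimono by (intro vec.span_minimal subspace_zero_locus) blast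

lemma to_ac_vec_add: "to_ac_vec (x + y) = to_ac_vec x + to_ac_vec y"
  by (simp add: to_ac_vec_def vec_eq_iff)

lemma to_ac_vec_scale: "to_ac_vec (t *s x) = to_ac t *s to_ac_vec x"
  by (simp add: to_ac_vec_def vec_eq_iff)

lemma to_ac_vec_0: "to_ac_vec 0 = 0"
  by (simp add: to_ac_vec_def vec_eq_iff)

lemma to_ac_vec_span: "to_ac_vec ` vec.span A \<subseteq> vec.span (to_ac_vec ` A)"
proof -
  have "vec.subspace {y. to_ac_vec y \<in> vec.span (to_ac_vec ` A)}"
    unfolding vec.subspace_def
    by (simp add: to_ac_vec_add to_ac_vec_scale to_ac_vec_0 vec.span_zero vec.span_add vec.span_scale)
  then have "vec.span A \<subseteq> {y. to_ac_vec y \<in> vec.span (to_ac_vec ` A)}"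
    by (intro vec.span_minimal) (auto intro: vec.span_base)
  then show ?thesis
    by blast
qed

lemma to_ac_vec_annihilator_plus_Inter:
  fixes Q :: "'i \<Rightarrow> ('k::field ^ 'n::finite) set"
  assumes "vec.subspace B" and Q: "\<forall>i\<in>I. vec.subspace (Q i)"
  shows "to_ac_vec ` annihilator (B + (\<Inter>i\<in>I. Q i))
    \<subseteq> zero_locus B \<inter> vec.span (\<Union>i\<in>I. zero_locus (Q i))"
proof -
  let ?C = "\<Inter>i\<in>I. Q i"
  have C: "vec.subspace ?C"
    using Q by (simp add: vec.subspace_Int)
  have "?C \<subseteq> B + ?C"
    using set_zero_plus2 vec.subspace_0[OF assms(1)] .
  then have "to_ac_vec ` annihilator (B + ?C) \<subseteq> to_ac_vec ` annihilator ?C"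
    by (intro image_mono annihilator_antimono)
  also have "\<dots> \<subseteq> to_ac_vec ` vec.span (\<Union>i\<in>I. annihilator (Q i))"
    using annihilator_Inter_subset_span[OF Q] by (rule image_mono)
  also have "\<dots> \<subseteq> vec.span (to_ac_vec ` (\<Union>i\<in>I. annihilator (Q i)))"
    by (rule to_ac_vec_span)
  also have "\<dots> \<subseteq> vec.span (\<Union>i\<in>I. zero_locus (Q i))"
    using to_ac_vec_annihilator by (intro vec.span_mono) blast
  finally have "to_ac_vec ` annihilator (B + ?C) \<subseteq> vec.span (\<Union>i\<in>I. zero_locus (Q i))" .
  moreover have "B \<subseteq> B + ?C"
    using set_zero_plus2[OF vec.subspace_0[OF C], of B] by (simp only: add.commute)
  then have "to_ac_vec ` annihilator (B + ?C) \<subseteq> zero_locus B"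
    using annihilator_antimono to_ac_vec_annihilator by blast
  ultimately show ?thesis
    by blast
qed

lemma subset_plus_Inter_if_zero_locus_joined:
  fixes Q :: "'i \<Rightarrow> ('k::field ^ 'n::finite) set"
  assumes "finite I" and "vec.subspace B" and Q: "\<forall>i\<in>I. vec.subspace (Q i)"
    and joined: "zero_locus B \<inter> vec.span (\<Union>i\<in>I. zero_locus (Q i)) \<subseteq> (\<Union>i\<in>I. zero_locus (Q i))"
  shows "\<exists>j\<in>I. Q j \<subseteq> B + (\<Inter>i\<in>I. Q i)"
proof (rule ccontr)
  let ?C = "\<Inter>i\<in>I. Q i" and ?U = "zero_locus B \<inter> vec.span (\<Union>i\<in>I. zero_locus (Q i))"
  have C: "vec.subspace ?C"
    using Q by (simp add: vec.subspace_Int)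
  have "B + ?C = {b + c | b c. b \<in> B \<and> c \<in> ?C}"
    by (auto simp: set_plus_def)
  then have E: "vec.subspace (B + ?C)"
    using vec.subspace_sums[OF assms(2) C] by simp
  have U: "vec.subspace ?U"
    by (intro vec.subspace_inter subspace_zero_locus vec.subspace_span)
  assume "\<not> (\<exists>j\<in>I. Q j \<subseteq> B + ?C)"
  then have "\<forall>j\<in>I. \<exists>a. a \<in> Q j \<and> a \<notin> B + ?C"
    by blast
  then obtain a where a: "\<forall>j\<in>I. a j \<in> Q j \<and> a j \<notin> B + ?C"
    by (rule bchoice[THEN exE]) blast
  have "\<exists>u\<in>?U. pairing (to_ac_vec (a j)) u \<noteq> 0" if j: "j \<in> I" for j
  proof -
    have "a j \<notin> B + ?C"
      using a j by blast
    then obtain x where x: "x \<in> annihilator (B + ?C)" "pairing (a j) x \<noteq> 0"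
      by (rule exists_annihilator_pairing_nonzero[OF E])
    then have "to_ac_vec x \<in> ?U"
      using to_ac_vec_annihilator_plus_Inter[OF assms(2) Q] by blast
    with x(2) show ?thesis
      by (intro bexI[of _ "to_ac_vec x"]) (simp_all add: pairing_to_ac_vec)
  qed
  then obtain v where v: "v \<in> ?U" "\<forall>j\<in>I. pairing (to_ac_vec (a j)) v \<noteq> 0"
    using subspace_avoids_hyperplanes[OF infinite_UNIV_alg_closed U assms(1), of "\<lambda>j. to_ac_vec (a j)"]
    by blast
  then obtain j where "j \<in> I" "v \<in> zero_locus (Q j)"
    using joined by blast
  with v(2) a show False
    by (auto simp: zero_locus_eq_annihilator annihilator_def)
qed

section \<open>Evaluation of polynomials and ideals generated by linear forms\<close>

definition monom_eval :: "'a::comm_semiring_1 ^ 'n::finite \<Rightarrow> ('n \<Rightarrow>\<^sub>0 nat) \<Rightarrow> 'a" where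
  "monom_eval x m = (\<Prod>i\<in>UNIV. x $ i ^ Poly_Mapping.lookup m i)"

definition mpoly_eval :: "'k::field alg_closure ^ 'n::finite \<Rightarrow> ('k, 'n) mpoly \<Rightarrow> 'k alg_closure" where
  "mpoly_eval x p = (\<Sum>m\<in>Poly_Mapping.keys p. to_ac (Poly_Mapping.lookup p m) * monom_eval x m)"

lemma monom_eval_add: "monom_eval x (m + m') = monom_eval x m * monom_eval x m'"
  by (simp add: monom_eval_def lookup_add power_add prod.distrib)

lemma monom_eval_single: "monom_eval x (Poly_Mapping.single i 1) = x $ i"
proof -
  have "monom_eval x (Poly_Mapping.single i 1) = (\<Prod>j\<in>UNIV. if i = j then x $ j else 1)"
    unfolding monom_eval_def by (intro prod.cong) (auto simp: lookup_single)
  then show ?thesis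
    by simp
qed

lemma mpoly_eval_superset:
  assumes "finite S" and "Poly_Mapping.keys p \<subseteq> S"
  shows "mpoly_eval x p = (\<Sum>m\<in>S. to_ac (Poly_Mapping.lookup p m) * monom_eval x m)"
  unfolding mpoly_eval_def using assms by (intro sum.mono_neutral_left) (auto simp: in_keys_iff)

lemma mpoly_eval_single: "mpoly_eval x (Poly_Mapping.single m a) = to_ac a * monom_eval x m"
  by (subst mpoly_eval_superset[of "{m}"]) auto

lemma mpoly_eval_zero: "mpoly_eval x 0 = 0"
  by (simp add: mpoly_eval_def)

lemma mpoly_eval_add: "mpoly_eval x (p + q) = mpoly_eval x p + mpoly_eval x q"
proof -
  let ?S = "Poly_Mapping.keys p \<union> Poly_Mapping.keys q"
  have S: "finite ?S"
    by simp
  have "mpoly_eval x (p + q) = (\<Sum>m\<in>?S. to_ac (Poly_Mapping.lookup (p + q) m) * monom_eval x m)"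
    using S keys_add by (rule mpoly_eval_superset)
  also have "\<dots> = mpoly_eval x p + mpoly_eval x q"
    by (simp add: mpoly_eval_superset[OF S] lookup_add sum.distrib distrib_right)
  finally show ?thesis .
qed

lemma mpoly_eval_sum: "mpoly_eval x (\<Sum>i\<in>A. f i) = (\<Sum>i\<in>A. mpoly_eval x (f i))"
  by (induction A rule: infinite_finite_induct) (simp_all add: mpoly_eval_zero mpoly_eval_add)

lemma poly_mapping_sum_single: "p = (\<Sum>m\<in>Poly_Mapping.keys p. Poly_Mapping.single m (Poly_Mapping.lookup p m))"
proof (rule poly_mapping_eqI)
  fix k
  show "Poly_Mapping.lookup p k
      = Poly_Mapping.lookup (\<Sum>m\<in>Poly_Mapping.keys p. Poly_Mapping.single m (Poly_Mapping.lookup p m)) k"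
    by (simp add: lookup_sum lookup_single when_def in_keys_iff)
qed

lemma mpoly_eval_mult: "mpoly_eval x (p * q) = mpoly_eval x p * mpoly_eval x q"
proof -
  let ?P = "Poly_Mapping.keys p" and ?Q = "Poly_Mapping.keys q"
    and ?a = "Poly_Mapping.lookup p" and ?b = "Poly_Mapping.lookup q"
  have "p * q = (\<Sum>m\<in>?P. Poly_Mapping.single m (?a m)) * (\<Sum>m'\<in>?Q. Poly_Mapping.single m' (?b m'))"
    by (simp flip: poly_mapping_sum_single)
  also have "\<dots> = (\<Sum>m\<in>?P. \<Sum>m'\<in>?Q. Poly_Mapping.single (m + m') (?a m * ?b m'))"
    by (simp add: sum_product mult_single)
  finally have "mpoly_eval x (p * q)
      = (\<Sum>m\<in>?P. \<Sum>m'\<in>?Q. to_ac (?a m) * monom_eval x m * (to_ac (?b m') * monom_eval x m'))"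
    by (simp add: mpoly_eval_sum mpoly_eval_single monom_eval_add mult_ac)
  also have "\<dots> = mpoly_eval x p * mpoly_eval x q"
    by (simp add: mpoly_eval_def sum_product)
  finally show ?thesis .
qed

lemma mpoly_eval_one: "mpoly_eval x 1 = 1"
  using mpoly_eval_single[of x 0 1] by (simp add: monom_eval_def)

lemma mpoly_eval_prod: "mpoly_eval x (\<Prod>i\<in>A. f i) = (\<Prod>i\<in>A. mpoly_eval x (f i))"
  by (induction A rule: infinite_finite_induct) (simp_all add: mpoly_eval_one mpoly_eval_mult)

lemma mpoly_eval_lin_form: "mpoly_eval x (lin_form c) = pairing (to_ac_vec c) x"
  unfolding lin_form_def mpoly_eval_sum mpoly_eval_single monom_eval_single
  by (simp add: pairing_def to_ac_vec_def)

lemma lin_form_add: "lin_form (x + y) = lin_form x + lin_form y"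
  by (simp add: lin_form_def single_add sum.distrib)

interpretation comm_ring_module: Modules.module "(*) :: 'a::comm_ring_1 \<Rightarrow> 'a \<Rightarrow> 'a"
  by unfold_locales (simp_all add: algebra_simps)

lemma gen_ideal_eq_span: "gen_ideal G = comm_ring_module.span G"
  by (auto simp: gen_ideal_def comm_ring_module.span_explicit)

lemma mpoly_eval_gen_ideal_lin_form:
  assumes "x \<in> zero_locus A" and "p \<in> gen_ideal (lin_form ` A)"
  shows "mpoly_eval x p = 0"
proof -
  have "comm_ring_module.subspace {p. mpoly_eval x p = 0}"
    by (simp add: comm_ring_module.subspace_def mpoly_eval_zero mpoly_eval_add mpoly_eval_mult)
  moreover have "lin_form ` A \<subseteq> {p. mpoly_eval x p = 0}"
    using assms(1) by (auto simp: mpoly_eval_lin_form zero_locus_eq_annihilator annihilator_def)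
  ultimately have "comm_ring_module.span (lin_form ` A) \<subseteq> {p. mpoly_eval x p = 0}"
    by (intro comm_ring_module.span_minimal)
  then show ?thesis
    using assms(2) by (auto simp: gen_ideal_eq_span)
qed

lemma lin_ideal_subset_if_subset_plus:
  assumes "Q \<subseteq> A + B"
  shows "lin_ideal Q \<subseteq> gen_ideal (lin_form ` (A \<union> B))"
proof -
  let ?S = "comm_ring_module.span (lin_form ` (A \<union> B))"
  have "lin_form q \<in> ?S" if "q \<in> Q" for q
  proof -
    obtain a b where "a \<in> A" "b \<in> B" "q = a + b"
      using assms \<open>q \<in> Q\<close> by (auto simp: set_plus_def)
    then show ?thesis
      by (simp add: lin_form_add comm_ring_module.span_add comm_ring_module.span_base)
  qed
  then show ?thesis
    unfolding lin_ideal_def gen_ideal_eq_span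
    by (intro comm_ring_module.span_minimal comm_ring_module.subspace_span) blast
qed

lemma prod_lin_form_in_lin_ideal:
  assumes "finite A" and "j \<in> A" and "c j \<in> Q"
  shows "(\<Prod>i\<in>A. lin_form (c i)) \<in> lin_ideal Q"
proof -
  have "(\<Prod>i\<in>A. lin_form (c i)) = (\<Prod>i\<in>A - {j}. lin_form (c i)) * lin_form (c j)"
    using prod.remove[OF assms(1,2)] by (simp add: mult.commute)
  then show ?thesis
    unfolding lin_ideal_def gen_ideal_eq_span
    using assms(3) by (simp add: comm_ring_module.span_scale comm_ring_module.span_base)
qed

section \<open>Linearly joined sequences of linear subspaces\<close>

lemma zero_locus_joined_if_Inter_lin_ideal_subset:
  fixes Q :: "'i \<Rightarrow> ('k::field ^ 'n::finite) set"
  assumes "finite I" and "P \<subseteq> B" and "\<forall>j\<in>I. D \<subseteq> Q j"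
    and ideal: "(\<Inter>j\<in>I. lin_ideal (Q j)) \<subseteq> gen_ideal (lin_form ` (P \<union> D))"
  shows "zero_locus B \<inter> vec.span (\<Union>j\<in>I. zero_locus (Q j)) \<subseteq> (\<Union>j\<in>I. zero_locus (Q j))"
proof
  let ?Z = "\<Union>j\<in>I. zero_locus (Q j)"
  fix x assume x: "x \<in> zero_locus B \<inter> vec.span ?Z"
  show "x \<in> ?Z"
  proof (rule ccontr)
    assume "x \<notin> ?Z"
    then have "\<forall>j\<in>I. \<exists>c. c \<in> Q j \<and> pairing (to_ac_vec c) x \<noteq> 0"
      by (auto simp: zero_locus_eq_annihilator annihilator_def)
    then obtain c where c: "\<forall>j\<in>I. c j \<in> Q j \<and> pairing (to_ac_vec (c j)) x \<noteq> 0"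
      by (rule bchoice[THEN exE]) blast
    define F where "F = (\<Prod>j\<in>I. lin_form (c j))"
    have "F \<in> (\<Inter>j\<in>I. lin_ideal (Q j))"
      unfolding F_def using assms(1) c by (auto intro: prod_lin_form_in_lin_ideal)
    then have "F \<in> gen_ideal (lin_form ` (P \<union> D))"
      using ideal by blast
    moreover have "x \<in> zero_locus P"
      using x zero_locus_antimono[OF assms(2)] by blast
    moreover have "x \<in> zero_locus D"
      using x span_zero_locus_subset_zero_locus[OF assms(3)] by blast
    ultimately have "mpoly_eval x F = 0"
      by (intro mpoly_eval_gen_ideal_lin_form) (simp_all add: zero_locus_Un)
    moreover have "mpoly_eval x F \<noteq> 0"
      using assms(1) c by (simp add: F_def mpoly_eval_prod mpoly_eval_lin_form)
    ultimately show False
      by contradiction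
  qed
qed

lemma Inter_lin_ideal_subset_if_zero_locus_joined:
  fixes Q :: "'i \<Rightarrow> ('k::field ^ 'n::finite) set"
  assumes "finite I" and "vec.subspace B" and Q: "\<forall>i\<in>I. vec.subspace (Q i)"
    and "zero_locus B \<inter> vec.span (\<Union>i\<in>I. zero_locus (Q i)) \<subseteq> (\<Union>i\<in>I. zero_locus (Q i))"
    and "B \<subseteq> P + (\<Inter>i\<in>I. Q i)"
  shows "(\<Inter>j\<in>I. lin_ideal (Q j)) \<subseteq> gen_ideal (lin_form ` (P \<union> (\<Inter>i\<in>I. Q i)))"
proof -
  obtain j where j: "j \<in> I" and Q_j: "Q j \<subseteq> B + (\<Inter>i\<in>I. Q i)"
    using subset_plus_Inter_if_zero_locus_joined[OF assms(1-4)] by blast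
  moreover have "vec.subspace (\<Inter>i\<in>I. Q i)"
    using Q by (simp add: vec.subspace_Int)
  ultimately have "Q j \<subseteq> P + (\<Inter>i\<in>I. Q i)"
    using assms(5) vec.subset_plus_subspace_trans by blast
  then have "lin_ideal (Q j) \<subseteq> gen_ideal (lin_form ` (P \<union> (\<Inter>i\<in>I. Q i)))"
    by (rule lin_ideal_subset_if_subset_plus)
  then show ?thesis
    using j by blast
qed

lemma ideals_linearly_joined_iff:
  "ideals_linearly_joined Q l \<longleftrightarrow>
    (\<forall>i\<in>{1..<l}. zero_locus (Q (i+1)) \<inter> vec.span (\<Union>j\<in>{1..i}. zero_locus (Q j))
                   \<subseteq> (\<Union>j\<in>{1..i}. zero_locus (Q j)))"
proof -
  have span_zero_locus: "vec.span (zero_locus A) = zero_locus A" for A :: "('k::field ^ 'n::finite) set"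
    by (simp add: subspace_zero_locus vec.span_eq_iff)
  have join_iff: "Z \<inter> U = Z \<inter> vec.span U \<longleftrightarrow> Z \<inter> vec.span U \<subseteq> U" for Z U :: "('k::field alg_closure ^ 'n::finite) set"
    using vec.span_superset[of U] by blast
  show ?thesis
    unfolding ideals_linearly_joined_def linearly_joined_def by (simp only: span_zero_locus join_iff)
qed

lemma Inter_lin_ideal_subset_if_linearly_joined:
  fixes Q :: "nat \<Rightarrow> ('k::field ^ 'n::finite) set"
  assumes Q: "\<forall>i\<in>{1..l}. vec.subspace (Q i)" and "ideals_linearly_joined Q l"
    and k: "k \<in> {2..l}" and "Q k \<subseteq> P + (\<Inter>j\<in>{1..k-1}. Q j)"
  shows "(\<Inter>j\<in>{1..k-1}. lin_ideal (Q j)) \<subseteq> gen_ideal (lin_form ` (P \<union> (\<Inter>j\<in>{1..k-1}. Q j)))"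
proof -
  have "k - 1 \<in> {1..<l}"
    using k by auto
  then have "zero_locus (Q (k-1+1)) \<inter> vec.span (\<Union>j\<in>{1..k-1}. zero_locus (Q j))
      \<subseteq> (\<Union>j\<in>{1..k-1}. zero_locus (Q j))"
    using assms(2) unfolding ideals_linearly_joined_iff by blast
  then have joined_k: "zero_locus (Q k) \<inter> vec.span (\<Union>j\<in>{1..k-1}. zero_locus (Q j))
      \<subseteq> (\<Union>j\<in>{1..k-1}. zero_locus (Q j))"
    using k by simp
  have Q_k: "vec.subspace (Q k)" and Q_j: "\<forall>j\<in>{1..k-1}. vec.subspace (Q j)"
    using Q k by auto
  show ?thesis
    using Inter_lin_ideal_subset_if_zero_locus_joined[OF finite_atLeastAtMost Q_k Q_j joined_k assms(4)] .
qed

lemma direct_sum_eq_iff: "direct_sum_eq Q D P \<longleftrightarrow> Q = D + P \<and> D \<inter> P = {0}"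
proof -
  have "{d + p | d p. d \<in> D \<and> p \<in> P} = D + P"
    by (auto simp: set_plus_def)
  then show ?thesis
    by (simp add: direct_sum_eq_def)
qed

lemma exists_direct_sum_complement:
  assumes "vec.subspace D" and "vec.subspace Q" and "D \<subseteq> Q"
  shows "\<exists>P. vec.subspace P \<and> direct_sum_eq Q D P"
proof -
  obtain P where "vec.subspace P" "Q = D + P" "D \<inter> P = {0}"
    using assms by (rule vec.exists_complement_subspace)
  then show ?thesis
    by (auto simp: direct_sum_eq_iff)
qed

lemma direct_sum_eq_subset:
  assumes "direct_sum_eq Q D P"
  shows "D \<subseteq> Q" and "P \<subseteq> Q"
proof -
  have "Q = D + P" and "0 \<in> D" and "0 \<in> P"
    using assms by (auto simp: direct_sum_eq_iff)
  then show "D \<subseteq> Q" and "P \<subseteq> Q"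
    using set_zero_plus2[of D P] set_zero_plus2[of P D] by (simp_all add: add.commute)
qed

lemma direct_sum_eq_self: "direct_sum_eq Q Q P \<Longrightarrow> P = {0}"
  using direct_sum_eq_subset(2)[of Q Q P] by (auto simp: direct_sum_eq_iff)

lemma decreasing_chain_subset:
  fixes D :: "nat \<Rightarrow> 'a set"
  assumes "\<forall>i\<in>{1..<l}. D (i+1) \<subseteq> D i" and "1 \<le> j" and "j \<le> i" and "i \<le> l"
  shows "D i \<subseteq> D j"
  using assms(3,4)
proof (induction i rule: dec_induct)
  case (step n)
  then have "D (Suc n) \<subseteq> D n"
    using assms(1,2) by simp
  with step show ?case
    by simp
qed simp

definition linear_join_decomposition ::
  "(nat \<Rightarrow> ('k::field ^ 'n::finite) set) \<Rightarrow> nat \<Rightarrow> (nat \<Rightarrow> ('k ^ 'n) set) \<Rightarrow> (nat \<Rightarrow> ('k ^ 'n) set) \<Rightarrow> bool"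
where
  "linear_join_decomposition Q l D P \<longleftrightarrow>
     (\<forall>i\<in>{1..l}. vec.subspace (D i) \<and> vec.subspace (P i)) \<and>
     D l = {0} \<and> P 1 = {0} \<and>
     (\<forall>i\<in>{1..l}. direct_sum_eq (Q i) (D i) (P i)) \<and>
     (\<forall>i\<in>{1..<l}. D (i+1) \<subseteq> D i) \<and>
     (\<forall>k\<in>{2..l}. (\<Inter>j\<in>{1..k-1}. lin_ideal (Q j)) \<subseteq> gen_ideal (lin_form ` (P k \<union> D (k-1))))"

lemma linearly_joined_if_decomposition:
  assumes "linear_join_decomposition Q l D P"
  shows "ideals_linearly_joined Q l"
  unfolding ideals_linearly_joined_iff
proof
  fix i assume i: "i \<in> {1..<l}"
  have ds: "\<forall>i\<in>{1..l}. direct_sum_eq (Q i) (D i) (P i)"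
    and chain: "\<forall>i\<in>{1..<l}. D (i+1) \<subseteq> D i"
    and ideal: "\<forall>k\<in>{2..l}. (\<Inter>j\<in>{1..k-1}. lin_ideal (Q j)) \<subseteq> gen_ideal (lin_form ` (P k \<union> D (k-1)))"
    using assms by (simp_all add: linear_join_decomposition_def)
  have "i + 1 \<in> {1..l}"
    using i by simp
  then have "P (i+1) \<subseteq> Q (i+1)"
    using ds direct_sum_eq_subset(2) by blast
  moreover have "D i \<subseteq> Q j" if "j \<in> {1..i}" for j
  proof -
    have "D i \<subseteq> D j"
      using chain that i by (intro decreasing_chain_subset) auto
    moreover have "j \<in> {1..l}"
      using that i by simp
    ultimately show ?thesis
      using ds direct_sum_eq_subset(1) by blast
  qed
  moreover have "(\<Inter>j\<in>{1..i}. lin_ideal (Q j)) \<subseteq> gen_ideal (lin_form ` (P (i+1) \<union> D i))"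
  proof -
    have "i + 1 \<in> {2..l}"
      using i by simp
    then show ?thesis
      using ideal by fastforce
  qed
  ultimately show "zero_locus (Q (i+1)) \<inter> vec.span (\<Union>j\<in>{1..i}. zero_locus (Q j))
      \<subseteq> (\<Union>j\<in>{1..i}. zero_locus (Q j))"
    by (intro zero_locus_joined_if_Inter_lin_ideal_subset) auto
qed

lemma decomposition_if_linearly_joined:
  fixes Q :: "nat \<Rightarrow> ('k::field ^ 'n::finite) set"
  assumes "l \<ge> 2" and Q: "\<forall>i\<in>{1..l}. vec.subspace (Q i)" and joined: "ideals_linearly_joined Q l"
  shows "\<exists>D P. linear_join_decomposition Q l D P"
proof -
  define D where "D i = (if i < l then (\<Inter>j\<in>{1..i}. Q j) else {0})" for i
  have D_subspace: "vec.subspace (D i)" for i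
    using Q by (auto simp: D_def intro!: vec.subspace_Int)
  have D_chain: "D (i+1) \<subseteq> D i" for i
    using vec.subspace_0[OF D_subspace[of i]] by (auto simp: D_def)
  have "\<forall>i\<in>{1..l}. \<exists>P. vec.subspace P \<and> direct_sum_eq (Q i) (D i) P"
  proof
    fix i assume i: "i \<in> {1..l}"
    then have Q_i: "vec.subspace (Q i)"
      using Q by blast
    then have "D i \<subseteq> Q i"
      using i vec.subspace_0[OF Q_i] by (auto simp: D_def)
    with Q_i show "\<exists>P. vec.subspace P \<and> direct_sum_eq (Q i) (D i) P"
      using D_subspace exists_direct_sum_complement by blast
  qed
  then obtain P where P: "\<forall>i\<in>{1..l}. vec.subspace (P i) \<and> direct_sum_eq (Q i) (D i) (P i)"
    by (rule bchoice[THEN exE]) blast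
  have "direct_sum_eq (Q 1) (D 1) (P 1)"
    using P assms(1) by simp
  then have "direct_sum_eq (Q 1) (Q 1) (P 1)"
    using assms(1) by (simp add: D_def)
  then have "P 1 = {0}"
    by (rule direct_sum_eq_self)
  moreover have "(\<Inter>j\<in>{1..k-1}. lin_ideal (Q j)) \<subseteq> gen_ideal (lin_form ` (P k \<union> D (k-1)))"
    if k: "k \<in> {2..l}" for k
  proof -
    have D_k1: "D (k-1) = (\<Inter>j\<in>{1..k-1}. Q j)"
      using k by (auto simp: D_def)
    have "D k \<subseteq> D (k-1)"
      using D_chain[of "k-1"] k by simp
    then have "D k + P k \<subseteq> D (k-1) + P k"
      by (rule set_plus_mono2) simp
    then have "Q k \<subseteq> P k + (\<Inter>j\<in>{1..k-1}. Q j)"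
      using P k D_k1 by (simp add: direct_sum_eq_iff add.commute)
    then show ?thesis
      unfolding D_k1 by (rule Inter_lin_ideal_subset_if_linearly_joined[OF Q joined k])
  qed
  moreover have "D l = {0}"
    by (simp add: D_def)
  ultimately show ?thesis
    unfolding linear_join_decomposition_def using P D_subspace D_chain
    by (intro exI[of _ D] exI[of _ P]) auto
qed

theorem mainTheorem3:
  fixes Q :: "nat \<Rightarrow> ('k::field ^ 'n::finite) set" and l :: nat
  assumes "l \<ge> 2"
    and "\<forall>i\<in>{1..l}. vec.subspace (Q i)"
  shows "ideals_linearly_joined Q l \<longleftrightarrow>
    (\<exists>D P :: nat \<Rightarrow> ('k ^ 'n) set.
       (\<forall>i\<in>{1..l}. vec.subspace (D i) \<and> vec.subspace (P i)) \<and>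
       D l = {0} \<and> P 1 = {0} \<and>
       (\<forall>i\<in>{1..l}. direct_sum_eq (Q i) (D i) (P i)) \<and>
       (\<forall>i\<in>{1..<l}. D (i+1) \<subseteq> D i) \<and>
       (\<forall>k\<in>{2..l}. (\<Inter>j\<in>{1..k-1}. lin_ideal (Q j)) \<subseteq> gen_ideal (lin_form ` (P k \<union> D (k-1)))))"
proof -
  have "ideals_linearly_joined Q l \<longleftrightarrow> (\<exists>D P. linear_join_decomposition Q l D P)"
    using decomposition_if_linearly_joined[OF assms] linearly_joined_if_decomposition by blast
  then show ?thesis
    unfolding linear_join_decomposition_def .
qed

end
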